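(* Let $p$ be a state of a pDFA $\mathcal{A}$ and let $q$ be a state of a pDFA $\mathcal{B}$. Then the rooted involutive graphs $\Gamma(p)$ and $\Gamma(q)$ are isomorphic as rooted involutive graphs (not considering node labels) if and only if $\mathscr{L}(p)=\mathscr{L}(q)$.
   Context: A pDFA (partial deterministic finite automaton) over a finite alphabet $A$ is a finite $A$-edge-labeled directed graph $(Q,T)$, $T\subseteq Q\times A\times Q$, such that from each state there is at most one transition with any given label. For a state $p$, $\mathscr{L}(p)\subseteq A^*$ is the set of words labeling a run (finite path) starting in $p$. The graph $\Gamma(p)$ has as nodes the runs starting in $p$ (equivalently the words in $\mathscr{L}(p)$), root the empty run, and an edge from $\varrho$ to $\varrho\tau$ labeled by the label $a$ of the transition $\tau$, together with all inverse edges from $\varrho\tau$ to $\varrho$ labeled $a^{-1}$ (using the involutive alphabet $A^{\pm1}$ if $A$ is not involutive). An isomorphism of rooted edge-labeled graphs is a bijection on nodes preserving the root and preserving and reflecting labeled edges. *)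

theory Defs
  imports Main
begin

definition pDFA :: "'q set \<Rightarrow> 'a set \<Rightarrow> ('q \<times> 'a \<times> 'q) set \<Rightarrow> bool" where
  "pDFA Q A T \<longleftrightarrow> finite Q \<and> finite A \<and> T \<subseteq> Q \<times> A \<times> Q \<and>
     (\<forall>p a q q'. (p, a, q) \<in> T \<longrightarrow> (p, a, q') \<in> T \<longrightarrow> q = q')"

fun is_run :: "('q \<times> 'a \<times> 'q) set \<Rightarrow> 'q \<Rightarrow> ('q \<times> 'a \<times> 'q) list \<Rightarrow> bool" where
  "is_run T p [] = True"
| "is_run T p ((p', a, q) # rs) = (p' = p \<and> (p, a, q) \<in> T \<and> is_run T q rs)"

definition runs :: "('q \<times> 'a \<times> 'q) set \<Rightarrow> 'q \<Rightarrow> ('q \<times> 'a \<times> 'q) list set" where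
  "runs T p = {\<rho>. is_run T p \<rho>}"

definition tlabel :: "'q \<times> 'a \<times> 'q \<Rightarrow> 'a" where
  "tlabel \<tau> = fst (snd \<tau>)"

definition lang :: "('q \<times> 'a \<times> 'q) set \<Rightarrow> 'q \<Rightarrow> 'a list set" where
  "lang T p = {map tlabel \<rho> | \<rho>. \<rho> \<in> runs T p}"

text \<open>Involutive alphabet: (a, True) stands for a, (a, False) for its formal inverse a^-1.
  A rooted edge-labeled graph is a triple (nodes, labeled edges, root).\<close>
type_synonym ('v, 'l) rgraph = "'v set \<times> ('v \<times> 'l \<times> 'v) set \<times> 'v"

definition Gamma_edges :: "('q \<times> 'a \<times> 'q) set \<Rightarrow> 'q \<Rightarrow>
    (('q \<times> 'a \<times> 'q) list \<times> ('a \<times> bool) \<times> ('q \<times> 'a \<times> 'q) list) set" where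
  "Gamma_edges T p =
     {(\<rho>, (tlabel \<tau>, True), \<rho> @ [\<tau>]) | \<rho> \<tau>. \<rho> @ [\<tau>] \<in> runs T p} \<union>
     {(\<rho> @ [\<tau>], (tlabel \<tau>, False), \<rho>) | \<rho> \<tau>. \<rho> @ [\<tau>] \<in> runs T p}"

definition Gamma :: "('q \<times> 'a \<times> 'q) set \<Rightarrow> 'q \<Rightarrow> (('q \<times> 'a \<times> 'q) list, 'a \<times> bool) rgraph" where
  "Gamma T p = (runs T p, Gamma_edges T p, [])"

definition rgraph_iso :: "('v, 'l) rgraph \<Rightarrow> ('w, 'l) rgraph \<Rightarrow> bool" where
  "rgraph_iso G H \<longleftrightarrow> (case G of (V1, E1, r1) \<Rightarrow> case H of (V2, E2, r2) \<Rightarrow>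
     (\<exists>f. bij_betw f V1 V2 \<and> f r1 = r2 \<and>
        (\<forall>u\<in>V1. \<forall>v\<in>V1. \<forall>l. (u, l, v) \<in> E1 \<longleftrightarrow> (f u, l, f v) \<in> E2)))"

end

theory Submission
  imports Defs
begin

text \<open>In a deterministic automaton a run from p is determined by the word it reads, so
  Gamma(p) is isomorphic to the word graph of L(p): its nodes are the words of L(p), with an
  a-labelled edge from w to wa and the inverse edge back. An isomorphism between two word graphs
  fixes the root and must follow the unique a-edge leaving each node, so by induction on the
  length of words it is the identity; hence the two languages coincide.\<close>

lemma rgraph_iso_refl: "rgraph_iso G G"
  unfolding rgraph_iso_def by (cases G) (auto intro!: exI[of _ id])

lemma rgraph_iso_sym:
  assumes "rgraph_iso (V1, E1, r1) (V2, E2, r2)" and "r1 \<in> V1"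
  shows "rgraph_iso (V2, E2, r2) (V1, E1, r1)"
proof -
  obtain f where f: "bij_betw f V1 V2" "f r1 = r2"
    and edges: "\<forall>u\<in>V1. \<forall>v\<in>V1. \<forall>l. (u, l, v) \<in> E1 \<longleftrightarrow> (f u, l, f v) \<in> E2"
    using assms(1) unfolding rgraph_iso_def by auto
  define g where "g = the_inv_into V1 f"
  have g: "bij_betw g V2 V1" "g r2 = r1"
    using bij_betw_the_inv_into[OF f(1)] the_inv_into_f_f[OF bij_betw_imp_inj_on[OF f(1)] assms(2)]
    by (simp_all add: g_def f(2))
  have "\<forall>u\<in>V2. \<forall>v\<in>V2. \<forall>l. (u, l, v) \<in> E2 \<longleftrightarrow> (g u, l, g v) \<in> E1"
    using edges bij_betwE[OF g(1)] f_the_inv_into_f_bij_betw[OF f(1)] by (metis g_def)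
  with g show ?thesis
    unfolding rgraph_iso_def by auto
qed

lemma rgraph_iso_trans:
  assumes "rgraph_iso (V1, E1, r1) (V2, E2, r2)" and "rgraph_iso (V2, E2, r2) (V3, E3, r3)"
  shows "rgraph_iso (V1, E1, r1) (V3, E3, r3)"
proof -
  obtain f where f: "bij_betw f V1 V2" "f r1 = r2"
    and f_edges: "\<forall>u\<in>V1. \<forall>v\<in>V1. \<forall>l. (u, l, v) \<in> E1 \<longleftrightarrow> (f u, l, f v) \<in> E2"
    using assms(1) unfolding rgraph_iso_def by auto
  obtain g where g: "bij_betw g V2 V3" "g r2 = r3"
    and g_edges: "\<forall>u\<in>V2. \<forall>v\<in>V2. \<forall>l. (u, l, v) \<in> E2 \<longleftrightarrow> (g u, l, g v) \<in> E3"
    using assms(2) unfolding rgraph_iso_def by auto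
  have "bij_betw (g \<circ> f) V1 V3"
    using f(1) g(1) by (rule bij_betw_trans)
  moreover have "\<forall>u\<in>V1. \<forall>v\<in>V1. \<forall>l. (u, l, v) \<in> E1 \<longleftrightarrow> ((g \<circ> f) u, l, (g \<circ> f) v) \<in> E3"
    using f_edges g_edges bij_betwE[OF f(1)] by simp
  ultimately show ?thesis
    using f(2) g(2) unfolding rgraph_iso_def by auto
qed

definition deterministic :: "('q \<times> 'a \<times> 'q) set \<Rightarrow> bool" where
  "deterministic T \<longleftrightarrow> (\<forall>p a q q'. (p, a, q) \<in> T \<longrightarrow> (p, a, q') \<in> T \<longrightarrow> q = q')"

lemma pDFA_imp_deterministic: "pDFA Q A T \<Longrightarrow> deterministic T"
  by (simp add: pDFA_def deterministic_def)

lemma is_run_appendD: "is_run T p (xs @ ys) \<Longrightarrow> is_run T p xs"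
  by (induction xs arbitrary: p) auto

lemma Nil_in_runs: "[] \<in> runs T p"
  by (simp add: runs_def)

lemma runs_snocD: "\<rho> @ [\<tau>] \<in> runs T p \<Longrightarrow> \<rho> \<in> runs T p"
  by (auto simp: runs_def dest: is_run_appendD)

lemma lang_eq_image_runs: "lang T p = map tlabel ` runs T p"
  by (auto simp: lang_def)

lemma map_tlabel_runs_in_lang: "\<rho> \<in> runs T p \<Longrightarrow> map tlabel \<rho> \<in> lang T p"
  by (simp add: lang_eq_image_runs)

lemma lang_snocD:
  assumes "w @ [a] \<in> lang T p"
  shows "w \<in> lang T p"
proof -
  obtain \<rho> where \<rho>: "\<rho> \<in> runs T p" "map tlabel \<rho> = w @ [a]"
    using assms by (auto simp: lang_def)
  then obtain \<rho>' \<tau> where "\<rho> = \<rho>' @ [\<tau>]"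
    by (cases \<rho> rule: rev_cases) auto
  with \<rho> have "\<rho>' \<in> runs T p" "map tlabel \<rho>' = w"
    by (auto dest: runs_snocD)
  then show ?thesis
    by (auto simp: lang_def)
qed

lemma inj_on_map_tlabel_runs:
  assumes "deterministic T"
  shows "inj_on (map tlabel) (runs T p)"
proof -
  have "\<rho> = \<sigma>" if "is_run T p \<rho>" "is_run T p \<sigma>" "map tlabel \<rho> = map tlabel \<sigma>" for \<rho> \<sigma>
    using that
  proof (induction \<rho> arbitrary: p \<sigma>)
    case Nil
    then show ?case by simp
  next
    case (Cons \<tau> \<rho>)
    then obtain \<tau>' \<sigma>' where \<sigma>: "\<sigma> = \<tau>' # \<sigma>'"
      by (cases \<sigma>) auto
    with Cons.prems assms have "\<tau>' = \<tau>"
      by (cases \<tau>; cases \<tau>') (auto simp: tlabel_def deterministic_def)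
    with Cons \<sigma> show ?case
      by (cases \<tau>) auto
  qed
  then show ?thesis
    by (auto simp: inj_on_def runs_def)
qed

lemma bij_betw_map_tlabel_runs_lang:
  "deterministic T \<Longrightarrow> bij_betw (map tlabel) (runs T p) (lang T p)"
  by (simp add: bij_betw_def inj_on_map_tlabel_runs lang_eq_image_runs)

lemma runs_word_snocD:
  assumes "deterministic T" "\<rho> \<in> runs T p" "\<sigma> \<in> runs T p"
    and "map tlabel \<sigma> = map tlabel \<rho> @ [a]"
  obtains \<tau> where "\<sigma> = \<rho> @ [\<tau>]" "tlabel \<tau> = a"
proof -
  obtain \<sigma>' \<tau> where \<sigma>: "\<sigma> = \<sigma>' @ [\<tau>]"
    using assms(4) by (cases \<sigma> rule: rev_cases) auto
  with assms(4) have "map tlabel \<sigma>' = map tlabel \<rho>" "tlabel \<tau> = a"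
    by auto
  moreover have "\<sigma>' \<in> runs T p"
    using assms(3) \<sigma> by (blast dest: runs_snocD)
  ultimately have "\<sigma>' = \<rho>"
    using inj_on_map_tlabel_runs[OF assms(1)] assms(2) by (auto dest: inj_onD)
  with \<sigma> \<open>tlabel \<tau> = a\<close> show thesis
    by (auto intro: that)
qed

definition word_edges :: "'a list set \<Rightarrow> ('a list \<times> ('a \<times> bool) \<times> 'a list) set" where
  "word_edges L =
     {(w, (a, True), w @ [a]) | w a. w @ [a] \<in> L} \<union>
     {(w @ [a], (a, False), w) | w a. w @ [a] \<in> L}"

definition word_graph :: "'a list set \<Rightarrow> ('a list, 'a \<times> bool) rgraph" where
  "word_graph L = (L, word_edges L, [])"

lemma Gamma_edges_imp_word_edges:
  "(\<rho>, l, \<sigma>) \<in> Gamma_edges T p \<Longrightarrow> (map tlabel \<rho>, l, map tlabel \<sigma>) \<in> word_edges (lang T p)"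
  unfolding Gamma_edges_def word_edges_def
  by (fastforce dest: map_tlabel_runs_in_lang)

lemma word_edges_imp_Gamma_edges:
  assumes "deterministic T" "\<rho> \<in> runs T p" "\<sigma> \<in> runs T p"
    and "(map tlabel \<rho>, l, map tlabel \<sigma>) \<in> word_edges (lang T p)"
  shows "(\<rho>, l, \<sigma>) \<in> Gamma_edges T p"
proof (cases "snd l")
  case True
  with assms(4) obtain a where l: "l = (a, True)" "map tlabel \<sigma> = map tlabel \<rho> @ [a]"
    unfolding word_edges_def by auto
  with assms(1-3) obtain \<tau> where "\<sigma> = \<rho> @ [\<tau>]" "tlabel \<tau> = a"
    by (elim runs_word_snocD)
  with l assms(3) show ?thesis
    unfolding Gamma_edges_def by blast
next
  case False
  with assms(4) obtain a where l: "l = (a, False)" "map tlabel \<rho> = map tlabel \<sigma> @ [a]"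
    unfolding word_edges_def by auto
  with assms(1-3) obtain \<tau> where "\<rho> = \<sigma> @ [\<tau>]" "tlabel \<tau> = a"
    by (elim runs_word_snocD)
  with l assms(2) show ?thesis
    unfolding Gamma_edges_def by blast
qed

lemma rgraph_iso_Gamma_word_graph:
  assumes "deterministic T"
  shows "rgraph_iso (Gamma T p) (word_graph (lang T p))"
proof -
  have "(\<rho>, l, \<sigma>) \<in> Gamma_edges T p \<longleftrightarrow>
      (map tlabel \<rho>, l, map tlabel \<sigma>) \<in> word_edges (lang T p)"
    if "\<rho> \<in> runs T p" "\<sigma> \<in> runs T p" for \<rho> \<sigma> l
    using Gamma_edges_imp_word_edges word_edges_imp_Gamma_edges[OF assms that] by (rule iffI)
  with bij_betw_map_tlabel_runs_lang[OF assms] show ?thesis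
    unfolding rgraph_iso_def Gamma_def word_graph_def by auto
qed

lemma rgraph_iso_word_graph_iff:
  assumes prefix_closed: "\<And>w a. w @ [a] \<in> L \<Longrightarrow> w \<in> L"
  shows "rgraph_iso (word_graph L) (word_graph M) \<longleftrightarrow> L = M"
proof
  assume "rgraph_iso (word_graph L) (word_graph M)"
  then obtain f where f: "bij_betw f L M" "f [] = []"
    and edges: "\<forall>u\<in>L. \<forall>v\<in>L. \<forall>l. (u, l, v) \<in> word_edges L \<longleftrightarrow> (f u, l, f v) \<in> word_edges M"
    unfolding rgraph_iso_def word_graph_def by auto
  have "f w = w" if "w \<in> L" for w
    using that
  proof (induction w rule: rev_induct)
    case Nil
    then show ?case using f(2) by simp
  next
    case (snoc a w)
    from snoc.prems have "w \<in> L" by (rule prefix_closed)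
    have "(w, (a, True), w @ [a]) \<in> word_edges L"
      using snoc.prems unfolding word_edges_def by blast
    then have "(w, (a, True), f (w @ [a])) \<in> word_edges M"
      using edges snoc.prems \<open>w \<in> L\<close> snoc.IH by metis
    then show ?case
      unfolding word_edges_def by auto
  qed
  then have "f ` L = L"
    by simp
  with f(1) show "L = M"
    by (simp add: bij_betw_def)
next
  assume "L = M"
  then show "rgraph_iso (word_graph L) (word_graph M)"
    by (simp add: rgraph_iso_refl)
qed

theorem fact3p7:
  fixes QA :: "'q set" and QB :: "'r set" and A :: "'a set"
    and TA :: "('q \<times> 'a \<times> 'q) set" and TB :: "('r \<times> 'a \<times> 'r) set"
  assumes "pDFA QA A TA" and "pDFA QB A TB" and "p \<in> QA" and "q \<in> QB"
  shows "rgraph_iso (Gamma TA p) (Gamma TB q) \<longleftrightarrow> lang TA p = lang TB q"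
proof -
  have "deterministic TA" "deterministic TB"
    using assms(1,2) by (simp_all add: pDFA_imp_deterministic)
  then have iso_A: "rgraph_iso (runs TA p, Gamma_edges TA p, []) (lang TA p, word_edges (lang TA p), [])"
    and iso_B: "rgraph_iso (runs TB q, Gamma_edges TB q, []) (lang TB q, word_edges (lang TB q), [])"
    by (simp_all add: rgraph_iso_Gamma_word_graph[unfolded Gamma_def word_graph_def])
  have "rgraph_iso (Gamma TA p) (Gamma TB q) \<longleftrightarrow>
      rgraph_iso (word_graph (lang TA p)) (word_graph (lang TB q))"
    unfolding Gamma_def word_graph_def
    using rgraph_iso_trans[OF rgraph_iso_trans[OF rgraph_iso_sym[OF iso_A Nil_in_runs]] iso_B]
      rgraph_iso_trans[OF rgraph_iso_trans[OF iso_A] rgraph_iso_sym[OF iso_B Nil_in_runs]]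
    by blast
  also have "\<dots> \<longleftrightarrow> lang TA p = lang TB q"
    using lang_snocD by (rule rgraph_iso_word_graph_iff)
  finally show ?thesis .
qed

end
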